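(* Let $G$ be a connected finite simple graph with at least one edge such that $\chi(G) = \Delta(G)$ and ${\rm vs}_{\chi}(G) = 1$. Then there exists a vertex $v \in V(G)$ with $d_G(v) = \Delta(G)$ and $\chi(G - v) = \Delta(G) - 1$.
   Context: $\chi(G)$ is the chromatic number, $\Delta(G)$ the maximum degree, and $d_G(v)$ the degree of $v$ in $G$. The chromatic vertex stability number ${\rm vs}_{\chi}(G)$ is the minimum number of vertices of $G$ whose deletion results in a graph $H$ with $\chi(H) = \chi(G)-1$. *)

theory Defs
  imports Main
begin

definition simple_graph :: "'a set \<Rightarrow> 'a set set \<Rightarrow> bool" where
  "simple_graph V E \<longleftrightarrow> finite V \<and> (\<forall>e\<in>E. e \<subseteq> V \<and> card e = 2)"

definition degree :: "'a set \<Rightarrow> 'a set set \<Rightarrow> 'a \<Rightarrow> nat" where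
  "degree V E v = card {u \<in> V. {u, v} \<in> E}"

definition max_degree :: "'a set \<Rightarrow> 'a set set \<Rightarrow> nat" where
  "max_degree V E = Max (degree V E ` V)"

definition connected_graph :: "'a set \<Rightarrow> 'a set set \<Rightarrow> bool" where
  "connected_graph V E \<longleftrightarrow> V \<noteq> {} \<and>
     (\<forall>u\<in>V. \<forall>v\<in>V. (\<lambda>x y. {x, y} \<in> E)\<^sup>*\<^sup>* u v)"

definition proper_colouring :: "'a set \<Rightarrow> 'a set set \<Rightarrow> nat \<Rightarrow> ('a \<Rightarrow> nat) \<Rightarrow> bool" where
  "proper_colouring V E k f \<longleftrightarrow> f ` V \<subseteq> {..<k} \<and>
     (\<forall>u\<in>V. \<forall>v\<in>V. {u, v} \<in> E \<longrightarrow> f u \<noteq> f v)"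

definition chromatic_number :: "'a set \<Rightarrow> 'a set set \<Rightarrow> nat" where
  "chromatic_number V E = (LEAST k. \<exists>f. proper_colouring V E k f)"

definition del_edges :: "'a set set \<Rightarrow> 'a set \<Rightarrow> 'a set set" where
  "del_edges E S = {e \<in> E. e \<inter> S = {}}"

definition chromatic_vertex_stability :: "'a set \<Rightarrow> 'a set set \<Rightarrow> nat" where
  "chromatic_vertex_stability V E =
     (LEAST n. \<exists>S \<subseteq> V. card S = n \<and>
        chromatic_number (V - S) (del_edges E S) = chromatic_number V E - 1)"

end

theory Submission
  imports Defs
begin

text \<open>Call a vertex critical if deleting it lowers the chromatic number. Let \<open>k = \<chi>(G)\<close>.
  If \<open>w\<close> is critical and \<open>d(w) < k\<close>, every \<open>(k-1)\<close>-colouring of \<open>G - w\<close> uses all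
  \<open>k - 1\<close> colours on the neighbourhood of \<open>w\<close> (otherwise it would extend to \<open>G\<close>), hence is
  injective there; recolouring \<open>w\<close> with the colour of a neighbour \<open>u\<close> then colours \<open>G - u\<close>,
  so \<open>u\<close> is critical as well. Since \<open>vs\<^sub>\<chi>(G) = 1\<close> provides a critical vertex, if all
  critical vertices had degree \<open>< k = \<Delta>(G)\<close>, criticality would spread along edges to a vertex
  of maximum degree, a contradiction.\<close>

definition neighbours :: "'a set \<Rightarrow> 'a set set \<Rightarrow> 'a \<Rightarrow> 'a set" where
  "neighbours V E v = {u \<in> V. {u, v} \<in> E}"

definition critical_vertex :: "'a set \<Rightarrow> 'a set set \<Rightarrow> 'a \<Rightarrow> bool" where
  "critical_vertex V E w \<longleftrightarrow> w \<in> V \<and>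
     chromatic_number (V - {w}) (del_edges E {w}) = chromatic_number V E - 1"

lemma degree_eq_card_neighbours: "degree V E v = card (neighbours V E v)"
  by (simp add: degree_def neighbours_def)

lemma degree_le_max_degree:
  assumes "finite V" "v \<in> V"
  shows "degree V E v \<le> max_degree V E"
  using assms by (simp add: max_degree_def)

lemma max_degree_attained:
  assumes "finite V" "V \<noteq> {}"
  obtains v where "v \<in> V" "degree V E v = max_degree V E"
  using Max_in[of "degree V E ` V"] assms unfolding max_degree_def by fastforce

lemma simple_graph_no_loop: "simple_graph V E \<Longrightarrow> {x} \<notin> E"
  unfolding simple_graph_def by fastforce

lemma simple_graph_edge_in_vertices: "simple_graph V E \<Longrightarrow> {u, v} \<in> E \<Longrightarrow> v \<in> V"
  unfolding simple_graph_def by blast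

lemma simple_graph_del_edges: "simple_graph V E \<Longrightarrow> simple_graph (V - S) (del_edges E S)"
  unfolding simple_graph_def del_edges_def by blast

lemma neighbours_del_edges:
  assumes "w \<noteq> u"
  shows "neighbours (V - {u}) (del_edges E {u}) w = neighbours V E w - {u}"
  using assms by (auto simp: neighbours_def del_edges_def)

lemma proper_colouring_mono:
  assumes "proper_colouring V E k f" "V' \<subseteq> V" "E' \<subseteq> E"
  shows "proper_colouring V' E' k f"
  using assms unfolding proper_colouring_def by blast

lemma chromatic_number_le: "proper_colouring V E k f \<Longrightarrow> chromatic_number V E \<le> k"
  unfolding chromatic_number_def by (blast intro: Least_le)

lemma proper_colouring_card:
  assumes "simple_graph V E"
  shows "\<exists>f. proper_colouring V E (card V) f"
proof -
  obtain f where f: "bij_betw f V {..<card V}"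
    using ex_bij_betw_finite_nat[of V] assms
    by (auto simp: simple_graph_def atLeast0LessThan)
  have "proper_colouring V E (card V) f"
    unfolding proper_colouring_def
  proof (intro conjI ballI impI)
    show "f ` V \<subseteq> {..<card V}" using f by (simp add: bij_betw_def)
  next
    fix u v assume "u \<in> V" "v \<in> V" "{u, v} \<in> E"
    moreover from \<open>{u, v} \<in> E\<close> have "u \<noteq> v"
      using simple_graph_no_loop[OF assms] by auto
    ultimately show "f u \<noteq> f v"
      using f by (auto simp: bij_betw_def dest: inj_onD)
  qed
  then show ?thesis by blast
qed

lemma chromatic_colouring_exists:
  assumes "simple_graph V E"
  shows "\<exists>f. proper_colouring V E (chromatic_number V E) f"
  unfolding chromatic_number_def
  using proper_colouring_card[OF assms] by (rule LeastI_ex[OF exI])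

lemma proper_colouring_extend_independent:
  assumes "proper_colouring (V - S) (del_edges E S) k f"
    and "\<forall>u\<in>S. \<forall>v\<in>S. {u, v} \<notin> E"
  shows "proper_colouring V E (Suc k) (\<lambda>x. if x \<in> S then k else f x)"
  using assms unfolding proper_colouring_def del_edges_def
  by (auto simp: less_Suc_eq)

lemma chromatic_number_le_Suc_delete_independent:
  assumes "simple_graph V E" "\<forall>u\<in>S. \<forall>v\<in>S. {u, v} \<notin> E"
  shows "chromatic_number V E \<le> Suc (chromatic_number (V - S) (del_edges E S))"
proof -
  obtain f where "proper_colouring (V - S) (del_edges E S)
      (chromatic_number (V - S) (del_edges E S)) f"
    using chromatic_colouring_exists[OF simple_graph_del_edges[OF assms(1)]] ..
  then show ?thesis
    using proper_colouring_extend_independent[OF _ assms(2)] chromatic_number_le by blast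
qed

lemma chromatic_number_delete_colour_class:
  assumes "simple_graph V E"
  shows "\<exists>S\<subseteq>V. chromatic_number (V - S) (del_edges E S) = chromatic_number V E - 1"
proof -
  let ?k = "chromatic_number V E"
  obtain f where f: "proper_colouring V E ?k f"
    using chromatic_colouring_exists[OF assms] ..
  define S where "S = {x \<in> V. f x = ?k - 1}"
  have "proper_colouring (V - S) (del_edges E S) (?k - 1) f"
    using f unfolding proper_colouring_def S_def del_edges_def by fastforce
  then have "chromatic_number (V - S) (del_edges E S) \<le> ?k - 1"
    by (rule chromatic_number_le)
  moreover have "\<forall>u\<in>S. \<forall>v\<in>S. {u, v} \<notin> E"
  proof (intro ballI)
    fix u v assume "u \<in> S" "v \<in> S"
    then have "u \<in> V" "v \<in> V" "f u = f v" by (auto simp: S_def)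
    then show "{u, v} \<notin> E" using f by (auto simp: proper_colouring_def)
  qed
  then have "?k \<le> Suc (chromatic_number (V - S) (del_edges E S))"
    by (rule chromatic_number_le_Suc_delete_independent[OF assms])
  moreover have "S \<subseteq> V" by (auto simp: S_def)
  ultimately show ?thesis by (intro exI[of _ S]) simp
qed

lemma chromatic_vertex_stability_witness:
  assumes "simple_graph V E"
  shows "\<exists>S\<subseteq>V. card S = chromatic_vertex_stability V E \<and>
           chromatic_number (V - S) (del_edges E S) = chromatic_number V E - 1"
proof -
  \<comment> \<open>The \<open>LEAST\<close> is attained because deleting a colour class always lowers \<open>\<chi>\<close> by one.\<close>
  have "\<exists>n. \<exists>S\<subseteq>V. card S = n \<and>
          chromatic_number (V - S) (del_edges E S) = chromatic_number V E - 1"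
    using chromatic_number_delete_colour_class[OF assms] by blast
  then show ?thesis
    unfolding chromatic_vertex_stability_def by (rule LeastI_ex)
qed

lemma critical_vertex_iff_colourable:
  assumes "simple_graph V E"
  shows "critical_vertex V E w \<longleftrightarrow> w \<in> V \<and>
           (\<exists>f. proper_colouring (V - {w}) (del_edges E {w}) (chromatic_number V E - 1) f)"
proof -
  let ?k = "chromatic_number V E" and ?k' = "chromatic_number (V - {w}) (del_edges E {w})"
  have "?k \<le> Suc ?k'"
    using chromatic_number_le_Suc_delete_independent[OF assms] simple_graph_no_loop[OF assms]
    by simp
  moreover obtain g where "proper_colouring (V - {w}) (del_edges E {w}) ?k' g"
    using chromatic_colouring_exists[OF simple_graph_del_edges[OF assms]] ..
  ultimately show ?thesis
    unfolding critical_vertex_def using chromatic_number_le by fastforce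
qed

lemma proper_colouring_extend_vertex:
  assumes "simple_graph V E" and "proper_colouring (V - {w}) (del_edges E {w}) k f"
    and "c < k" and "c \<notin> f ` neighbours V E w"
  shows "proper_colouring V E k (f(w := c))"
  unfolding proper_colouring_def
proof (intro conjI ballI impI)
  show "(f(w := c)) ` V \<subseteq> {..<k}"
    using assms(2,3) unfolding proper_colouring_def by auto
next
  fix x y assume xy: "x \<in> V" "y \<in> V" "{x, y} \<in> E"
  then have "x \<noteq> y" using simple_graph_no_loop[OF assms(1)] by auto
  consider "x = w" | "y = w" | "x \<noteq> w" "y \<noteq> w" by blast
  then show "(f(w := c)) x \<noteq> (f(w := c)) y"
  proof cases
    case 1
    then have "y \<in> neighbours V E w" using xy by (auto simp: neighbours_def insert_commute)
    then show ?thesis using 1 \<open>x \<noteq> y\<close> assms(4) by auto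
  next
    case 2
    then have "x \<in> neighbours V E w" using xy by (auto simp: neighbours_def)
    then show ?thesis using 2 \<open>x \<noteq> y\<close> assms(4) by auto
  next
    case 3
    then have "{x, y} \<in> del_edges E {w}" using xy by (auto simp: del_edges_def)
    then show ?thesis using 3 xy assms(2) by (auto simp: proper_colouring_def)
  qed
qed

lemma colouring_of_vertex_deletion_covers_neighbours:
  assumes "simple_graph V E"
    and "proper_colouring (V - {w}) (del_edges E {w}) (chromatic_number V E - 1) f"
  shows "{..<chromatic_number V E - 1} \<subseteq> f ` neighbours V E w"
proof
  fix c assume c: "c \<in> {..<chromatic_number V E - 1}"
  show "c \<in> f ` neighbours V E w"
  proof (rule ccontr)
    assume "c \<notin> f ` neighbours V E w"
    with c have "proper_colouring V E (chromatic_number V E - 1) (f(w := c))"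
      by (intro proper_colouring_extend_vertex[OF assms]) auto
    then have "chromatic_number V E \<le> chromatic_number V E - 1"
      by (rule chromatic_number_le)
    with c show False by simp
  qed
qed

lemma critical_vertex_neighbour:
  assumes G: "simple_graph V E"
    and w: "critical_vertex V E w" "degree V E w < chromatic_number V E"
    and u: "u \<in> neighbours V E w"
  shows "critical_vertex V E u"
proof -
  let ?k = "chromatic_number V E" and ?N = "neighbours V E w"
  obtain f where f: "proper_colouring (V - {w}) (del_edges E {w}) (?k - 1) f"
    using w(1) critical_vertex_iff_colourable[OF G] by blast
  have finN: "finite ?N" using G by (simp add: simple_graph_def neighbours_def)
  have "card ?N \<le> ?k - 1" using w(2) by (simp add: degree_eq_card_neighbours)
  also have "\<dots> = card {..<?k - 1}" by simp
  also have "\<dots> \<le> card (f ` ?N)"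
    by (rule card_mono[OF finite_imageI[OF finN]
          colouring_of_vertex_deletion_covers_neighbours[OF G f]])
  finally have "inj_on f ?N"
    using card_image_le[OF finN] eq_card_imp_inj_on[OF finN] le_antisym by blast
  moreover have "w \<noteq> u" "u \<in> V"
    using u simple_graph_no_loop[OF G] by (auto simp: neighbours_def)
  ultimately have fresh: "f u \<notin> f ` neighbours (V - {u}) (del_edges E {u}) w"
    using u by (auto simp: neighbours_del_edges inj_on_def)
  have "f u < ?k - 1"
    using f \<open>w \<noteq> u\<close> \<open>u \<in> V\<close> by (auto simp: proper_colouring_def)
  moreover have "proper_colouring ((V - {u}) - {w}) (del_edges (del_edges E {u}) {w}) (?k - 1) f"
    using f by (rule proper_colouring_mono) (auto simp: del_edges_def)
  ultimately have "proper_colouring (V - {u}) (del_edges E {u}) (?k - 1) (f(w := f u))"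
    using proper_colouring_extend_vertex[OF simple_graph_del_edges[OF G]] fresh by blast
  then show ?thesis
    using \<open>u \<in> V\<close> critical_vertex_iff_colourable[OF G] by blast
qed

lemma critical_vertex_connected:
  assumes G: "simple_graph V E" "connected_graph V E"
    and v: "critical_vertex V E v"
    and low_degree: "\<And>w. critical_vertex V E w \<Longrightarrow> degree V E w < chromatic_number V E"
    and "u \<in> V"
  shows "critical_vertex V E u"
proof -
  have "(\<lambda>x y. {x, y} \<in> E)\<^sup>*\<^sup>* v u"
    using G(2) v \<open>u \<in> V\<close> by (auto simp: connected_graph_def critical_vertex_def)
  then show ?thesis
  proof (induction rule: rtranclp_induct)
    case base
    show ?case by (rule v)
  next
    case (step y z)
    then have "z \<in> neighbours V E y"
      using simple_graph_edge_in_vertices[OF G(1)] by (auto simp: neighbours_def insert_commute)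
    then show ?case
      using critical_vertex_neighbour[OF G(1) step.IH low_degree[OF step.IH]] by blast
  qed
qed

theorem lemma3:
  fixes V :: "'a set" and E :: "'a set set"
  assumes "simple_graph V E"
    and "connected_graph V E"
    and "E \<noteq> {}"
    and "chromatic_number V E = max_degree V E"
    and "chromatic_vertex_stability V E = 1"
  shows "\<exists>v\<in>V. degree V E v = max_degree V E \<and>
           chromatic_number (V - {v}) (del_edges E {v}) = max_degree V E - 1"
proof -
  have finV: "finite V" and "V \<noteq> {}"
    using assms(1,2) by (auto simp: simple_graph_def connected_graph_def)
  obtain S where S: "S \<subseteq> V" "card S = 1"
    "chromatic_number (V - S) (del_edges E S) = chromatic_number V E - 1"
    using chromatic_vertex_stability_witness[OF assms(1)] assms(5) by auto
  then obtain v where "S = {v}" using card_1_singletonE by blast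
  with S have v: "critical_vertex V E v" by (simp add: critical_vertex_def)
  obtain m where "m \<in> V" "degree V E m = max_degree V E"
    using max_degree_attained[OF finV \<open>V \<noteq> {}\<close>] .
  then obtain w where w: "critical_vertex V E w" "\<not> degree V E w < max_degree V E"
    using critical_vertex_connected[OF assms(1,2) v] assms(4) by force
  then have "w \<in> V" "chromatic_number (V - {w}) (del_edges E {w}) = max_degree V E - 1"
    using assms(4) by (simp_all add: critical_vertex_def)
  moreover have "degree V E w = max_degree V E"
    using w(2) degree_le_max_degree[OF finV \<open>w \<in> V\<close>, of E] by simp
  ultimately show ?thesis by blast
qed

end
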